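(* Let $n\ge0$. For every Schröder path $\gamma$ of semi-length $n$, in the poset $\mathcal{S}_n$ we have $|\Delta\gamma|=\omega_H(\gamma)+\omega_{DU}(\gamma)$ and $|\nabla\gamma|=\omega^*_H(\gamma)+\omega_{UD}(\gamma)$. For every Grand Schröder path $\gamma$ of semi-length $n$, in the poset $\mathcal{GS}_n$ we have $|\Delta\gamma|=\omega_H(\gamma)+\omega_{DU}(\gamma)$ and $|\nabla\gamma|=\omega_H(\gamma)+\omega_{UD}(\gamma)$.
   Context: Steps: $U=(1,1)$, $D=(1,-1)$, $H=(2,0)$. A Grand Schröder path of semi-length $n$ is a lattice path from $(0,0)$ to $(2n,0)$ with steps $U,D,H$; a Schröder path is a Grand Schröder path never going below the $x$-axis. $\mathcal{S}_n$ (resp. $\mathcal{GS}_n$) is the set of Schröder (resp. Grand Schröder) paths of semi-length $n$, partially ordered by $\gamma_1\le\gamma_2$ iff $\gamma_1$ lies weakly below $\gamma_2$. $\Delta x$ is the set of elements covering $x$ and $\nabla x$ the set of elements covered by $x$. Paths are identified with words of steps; $\omega_\alpha(\gamma)$ is the number of occurrences of the word $\alpha$ as a factor of $\gamma$; $\omega^*_H(\gamma)$ is the number of $H$ steps of $\gamma$ not lying on the $x$-axis. *)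

theory Defs
  imports Main
begin

datatype step = U | D | H

type_synonym path = "step list"

(* unit-abscissa expansion: U and D advance x by 1, H advances x by 2 at constant height *)
fun unit_moves :: "step \<Rightarrow> int list" where
  "unit_moves U = [1]"
| "unit_moves D = [-1]"
| "unit_moves H = [0, 0]"

definition increments :: "path \<Rightarrow> int list" where
  "increments p = concat (map unit_moves p)"

definition height :: "path \<Rightarrow> nat \<Rightarrow> int" where
  "height p x = sum_list (take x (increments p))"

definition GS :: "nat \<Rightarrow> path set" where
  "GS n = {p. length (increments p) = 2 * n \<and> sum_list (increments p) = 0}"

definition S :: "nat \<Rightarrow> path set" where
  "S n = {p \<in> GS n. \<forall>x \<le> 2 * n. height p x \<ge> 0}"

(* p1 lies weakly below p2 (both piecewise linear with breakpoints at integer abscissas) *)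
definition below :: "path \<Rightarrow> path \<Rightarrow> bool" where
  "below p1 p2 \<longleftrightarrow> (\<forall>x. height p1 x \<le> height p2 x)"

definition strictly_below :: "path \<Rightarrow> path \<Rightarrow> bool" where
  "strictly_below p1 p2 \<longleftrightarrow> below p1 p2 \<and> p1 \<noteq> p2"

definition upcov :: "path set \<Rightarrow> path \<Rightarrow> path set" where
  "upcov P x = {y \<in> P. strictly_below x y \<and> \<not> (\<exists>z\<in>P. strictly_below x z \<and> strictly_below z y)}"

definition downcov :: "path set \<Rightarrow> path \<Rightarrow> path set" where
  "downcov P x = {y \<in> P. strictly_below y x \<and> \<not> (\<exists>z\<in>P. strictly_below y z \<and> strictly_below z x)}"

definition occ :: "step list \<Rightarrow> path \<Rightarrow> nat" where
  "occ a p = card {i. i + length a \<le> length p \<and> take (length a) (drop i p) = a}"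

(* number of H steps not lying on the x-axis *)
definition occ_H_off :: "path \<Rightarrow> nat" where
  "occ_H_off p = card {i. i < length p \<and> p ! i = H \<and> height (take i p) (length (increments (take i p))) \<noteq> 0}"

end

theory Submission
  imports Defs
begin

(* A (Grand) Schroeder path is determined by its height profile
   t \<mapsto> height p t on the unit abscissas, and p \<le> q means profile-wise \<le>.
   Two local moves change the profile at exactly one abscissa, by one unit:
   raising an H step to UD or a valley DU to H lifts the point just after the
   step's start, lowering an H step to DU or a peak UD to H drops it.  Such a
   one-point change is always a cover relation.  Conversely, if a < b then some
   raising move of a still lies below b: among the points where a < b, one where
   a is lowest is either the midpoint of an H step or a valley of a.  Dually for
   lowering moves.  Hence the upper covers of a path are exactly its raisings and
   the lower covers its lowerings (within an up-closed set of paths such as S n),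
   different moves give different paths, and counting the moves yields the
   formulas.  For Schroeder paths only lowerings that stay above the axis count:
   these are the peaks and the H steps off the axis. *)

lemma increments_Nil [simp]: "increments [] = []"
  by (simp add: increments_def)

lemma increments_Cons [simp]: "increments (s # p) = unit_moves s @ increments p"
  by (simp add: increments_def)

lemma increments_append [simp]: "increments (p @ q) = increments p @ increments q"
  by (simp add: increments_def)

lemma unit_moves_nonempty [simp]: "unit_moves s \<noteq> []"
  by (cases s) auto

lemma length_unit_moves: "length (unit_moves s) = (if s = H then 2 else 1)"
  by (cases s) auto

lemma increments_values: "x \<in> set (increments p) \<Longrightarrow> x = -1 \<or> x = 0 \<or> x = 1"
proof (induction p)
  case (Cons s p) then show ?case by (cases s) auto
qed simp

lemma increments_parity: "even (sum_list (increments p) + int (length (increments p)))"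
proof (induction p)
  case (Cons s p) then show ?case by (cases s) (auto simp: algebra_simps)
qed simp

lemma increments_inj: "increments p = increments q \<Longrightarrow> p = q"
proof (induction p arbitrary: q)
  case Nil then show ?case by (cases q) auto
next
  case (Cons s p)
  then obtain r q' where q: "q = r # q'" by (cases q) auto
  with Cons.prems have e: "unit_moves s @ increments p = unit_moves r @ increments q'" by simp
  then have "s = r" by (cases s; cases r) auto
  with e q Cons.IH show ?case by simp
qed

lemma height_0 [simp]: "height p 0 = 0"
  by (simp add: height_def)

lemma height_beyond: "length (increments p) \<le> t \<Longrightarrow> height p t = sum_list (increments p)"
  by (simp add: height_def)

lemma height_Suc:
  "t < length (increments p) \<Longrightarrow> height p (Suc t) = height p t + increments p ! t"
  by (simp add: height_def take_Suc_conv_app_nth)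

lemma height_unit_step: "\<bar>height p (Suc t) - height p t\<bar> \<le> 1"
proof (cases "t < length (increments p)")
  case True
  then have "increments p ! t \<in> set (increments p)" by simp
  then have "increments p ! t \<in> {-1, 0, 1}" using increments_values by blast
  then show ?thesis using height_Suc[OF True] by auto
qed (simp add: height_beyond)

definition vertex :: "path \<Rightarrow> nat \<Rightarrow> nat" where
  "vertex p i = length (increments (take i p))"

lemma vertex_0 [simp]: "vertex p 0 = 0"
  by (simp add: vertex_def)

lemma vertex_end: "length p \<le> i \<Longrightarrow> vertex p i = length (increments p)"
  by (simp add: vertex_def)

lemma vertex_Suc: "i < length p \<Longrightarrow> vertex p (Suc i) = vertex p i + length (unit_moves (p ! i))"
  by (simp add: vertex_def take_Suc_conv_app_nth)

lemma increments_split: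
  "i < length p \<Longrightarrow> increments p = increments (take i p) @ unit_moves (p ! i) @ increments (drop (Suc i) p)"
  by (metis id_take_nth_drop increments_Cons increments_append)

lemma height_vertex: "height p (vertex p i) = sum_list (increments (take i p))"
proof -
  have "increments p = increments (take i p) @ increments (drop i p)"
    by (metis append_take_drop_id increments_append)
  then show ?thesis by (simp add: height_def vertex_def)
qed

lemma vertex_parity: "even (height p (vertex p i) + int (vertex p i))"
  using increments_parity[of "take i p"] height_vertex[of p i] by (simp add: vertex_def)

lemma vertex_strict_mono: "i < j \<Longrightarrow> j \<le> length p \<Longrightarrow> vertex p i < vertex p j"
proof (induction j)
  case (Suc j)
  then show ?case using vertex_Suc[of j p] by (cases "i = j") (auto simp: length_unit_moves)
qed simp

lemma vertex_inj: "i \<le> length p \<Longrightarrow> j \<le> length p \<Longrightarrow> vertex p i = vertex p j \<Longrightarrow> i = j"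
  by (metis linorder_neqE_nat vertex_strict_mono less_irrefl)

lemma vertex_lt_length: "i < length p \<Longrightarrow> vertex p i < length (increments p)"
  using vertex_strict_mono[of i "length p" p] by (simp add: vertex_end)

lemma increments_after_vertex:
  "i < length p \<Longrightarrow> increments p ! vertex p i = hd (unit_moves (p ! i))"
  using increments_split[of i p] by (simp add: vertex_def nth_append hd_conv_nth)

lemma increments_H_midpoint:
  "i < length p \<Longrightarrow> p ! i = H \<Longrightarrow> increments p ! Suc (vertex p i) = 0"
  using increments_split[of i p] by (simp add: vertex_def nth_append)

lemma increments_before_vertex:
  assumes "i < length p"
  shows "increments p ! (vertex p (Suc i) - 1) = last (unit_moves (p ! i))"
proof (cases "p ! i = H")
  case True
  then show ?thesis using increments_H_midpoint[OF assms] by (simp add: vertex_Suc[OF assms])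
next
  case False
  then show ?thesis using increments_after_vertex[OF assms]
    by (cases "p ! i") (simp_all add: vertex_Suc[OF assms])
qed

lemma height_H_step:
  assumes "i < length p" "p ! i = H"
  shows "height p (Suc (vertex p i)) = height p (vertex p i)"
    and "height p (Suc (Suc (vertex p i))) = height p (vertex p i)"
proof -
  have l: "Suc (vertex p i) < length (increments p)"
    using increments_split[OF assms(1)] assms(2) by (simp add: vertex_def)
  show "height p (Suc (vertex p i)) = height p (vertex p i)"
    using height_Suc[of "vertex p i" p] increments_after_vertex[OF assms(1)] assms(2) l by simp
  then show "height p (Suc (Suc (vertex p i))) = height p (vertex p i)"
    using height_Suc[OF l] increments_H_midpoint[OF assms] by simp
qed

lemma vertex_or_midpoint:
  "t \<le> length (increments p) \<Longrightarrow>
   (\<exists>i\<le>length p. vertex p i = t) \<or> (\<exists>i<length p. p ! i = H \<and> Suc (vertex p i) = t)"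
proof (induction p arbitrary: t rule: rev_induct)
  case (snoc s p)
  have v: "i \<le> length p \<Longrightarrow> vertex (p @ [s]) i = vertex p i" for i
    by (simp add: vertex_def)
  have nth: "i < length p \<Longrightarrow> (p @ [s]) ! i = p ! i" for i
    by (simp add: nth_append)
  show ?case
  proof (cases "t \<le> length (increments p)")
    case True
    from snoc.IH[OF True] show ?thesis
    proof
      assume "\<exists>i\<le>length p. vertex p i = t"
      then obtain i where "i \<le> length p" "vertex p i = t" by blast
      then show ?thesis using v[of i] by (intro disjI1 exI[of _ i]) auto
    next
      assume "\<exists>i<length p. p ! i = H \<and> Suc (vertex p i) = t"
      then obtain i where "i < length p" "p ! i = H" "Suc (vertex p i) = t" by blast
      then show ?thesis using v[of i] nth[of i] by (intro disjI2 exI[of _ i]) auto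
    qed
  next
    case False
    have last_vertex: "vertex (p @ [s]) (Suc (length p)) = length (increments (p @ [s]))"
      and mid: "vertex (p @ [s]) (length p) = length (increments p)"
      by (simp_all add: vertex_def)
    have "t = length (increments (p @ [s])) \<or> (s = H \<and> t = Suc (length (increments p)))"
      using False snoc.prems by (cases s) auto
    then show ?thesis
    proof
      assume "t = length (increments (p @ [s]))"
      then show ?thesis using last_vertex by (intro disjI1 exI[of _ "Suc (length p)"]) auto
    next
      assume "s = H \<and> t = Suc (length (increments p))"
      then show ?thesis using mid by (intro disjI2 exI[of _ "length p"]) auto
    qed
  qed
qed simp

lemma odd_point_midpoint:
  assumes "odd (height p t + int t)" "t \<le> length (increments p)"
  shows "\<exists>i<length p. p ! i = H \<and> Suc (vertex p i) = t"
  using vertex_or_midpoint[OF assms(2)] vertex_parity[of p] assms(1) by auto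

lemma even_point_vertex:
  assumes "even (height p t + int t)" "0 < t" "t < length (increments p)"
  shows "\<exists>j. Suc j < length p \<and> vertex p (Suc j) = t"
proof -
  have not_mid: "\<not> (\<exists>i<length p. p ! i = H \<and> Suc (vertex p i) = t)"
  proof
    assume "\<exists>i<length p. p ! i = H \<and> Suc (vertex p i) = t"
    then obtain i where i: "i < length p" "p ! i = H" "Suc (vertex p i) = t" by blast
    have "even (height p (vertex p i) + int (vertex p i))" by (rule vertex_parity)
    then show False using assms(1) height_H_step(1)[OF i(1,2)] i(3) by auto
  qed
  obtain i where i: "i \<le> length p" "vertex p i = t"
    using vertex_or_midpoint[of t p] assms(3) not_mid by auto
  have "i \<noteq> 0" using i(2) assms(2) vertex_0[of p] by (metis less_irrefl)
  then obtain j where j: "i = Suc j" using not0_implies_Suc by blast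
  have "i \<noteq> length p" using i(2) assms(3) vertex_end[of p i] by auto
  then have "Suc j < length p" using i(1) j by simp
  then show ?thesis using i(2) j by blast
qed

definition zigzag :: "(nat \<Rightarrow> int) \<Rightarrow> bool" where
  "zigzag h \<longleftrightarrow> (\<forall>t. \<bar>h (Suc t) - h t\<bar> \<le> 1) \<and>
     (\<forall>t. odd (h t + int t) \<longrightarrow> 0 < t \<and> h (t - 1) = h t \<and> h (Suc t) = h t)"

(* height profiles of paths are zigzag: odd points are flat midpoints of H steps *)
lemma zigzag_height: "zigzag (height p)"
proof -
  have "0 < t \<and> height p (t - 1) = height p t \<and> height p (Suc t) = height p t"
    if odd: "odd (height p t + int t)" for t
  proof (cases "t \<le> length (increments p)")
    case True
    then obtain i where "i < length p" "p ! i = H" "Suc (vertex p i) = t"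
      using odd_point_midpoint odd by blast
    then show ?thesis using height_H_step by fastforce
  next
    case False
    then show ?thesis using height_beyond[of p] by simp
  qed
  then show ?thesis using height_unit_step by (simp add: zigzag_def)
qed

lemma zigzag_uminus: "zigzag h \<Longrightarrow> zigzag (\<lambda>t. - h t)"
proof -
  have "odd (- x + int t) \<longleftrightarrow> odd (x + int t)" for x :: int by presburger
  then show "zigzag h \<Longrightarrow> zigzag (\<lambda>t. - h t)" unfolding zigzag_def by (simp add: abs_minus_commute)
qed

(* Local step of the next lemma: let t be a point where ha < hb, of even parity,
   with ha t minimal among such points.  Then each neighbour s of t is either one
   unit above t on ha, or again a point where ha < hb, of odd parity. *)
lemma minimal_gap_neighbour:
  fixes ha hb :: "nat \<Rightarrow> int"
  assumes step_a: "\<bar>ha s - ha t\<bar> \<le> 1" and step_b: "\<bar>hb s - hb t\<bar> \<le> 1"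
    and flat_b: "odd (hb t + int t) \<Longrightarrow> hb s = hb t"
    and parity: "odd (int s + int t)"
    and gap: "ha t < hb t" and even_t: "even (ha t + int t)"
    and minimal: "ha s < hb s \<Longrightarrow> ha t \<le> ha s"
  shows "ha s = ha t + 1 \<or> (ha s < hb s \<and> odd (ha s + int s))"
proof -
  have not_below: "ha s \<noteq> ha t - 1"
    using step_b gap minimal by fastforce
  have "ha s < hb s \<and> odd (ha s + int s)" if same: "ha s = ha t"
  proof
    show "odd (ha s + int s)" using same even_t parity by presburger
    have "hb s \<noteq> ha t"
    proof
      assume "hb s = ha t"
      then have "hb t = ha t + 1" using step_b gap by simp
      then have "odd (hb t + int t)" using even_t by presburger
      then show False using flat_b \<open>hb s = ha t\<close> \<open>hb t = ha t + 1\<close> by simp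
    qed
    then show "ha s < hb s" using step_b gap same by simp
  qed
  then show ?thesis using step_a not_below by fastforce
qed

lemma zigzag_raisable_point:
  fixes ha hb :: "nat \<Rightarrow> int"
  assumes za: "zigzag ha" and zb: "zigzag hb"
    and le: "\<forall>t. ha t \<le> hb t" and start: "ha 0 = hb 0" and finish: "\<forall>t\<ge>L. ha t = hb t"
    and differ: "ha t0 \<noteq> hb t0"
  shows "\<exists>t. ha t < hb t \<and>
    (odd (ha t + int t) \<or> (0 < t \<and> ha (t - 1) = ha t + 1 \<and> ha (Suc t) = ha t + 1))"
proof -
  define T where "T = {t. ha t < hb t}"
  have "T \<subseteq> {..<L}"
    using finish by (auto simp: T_def) (metis linorder_not_less order_less_irrefl)
  then have fin: "finite (ha ` T)" by (simp add: finite_subset)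
  have "t0 \<in> T" using le differ by (simp add: T_def order_less_le)
  then have "Min (ha ` T) \<in> ha ` T" using fin by (intro Min_in) auto
  then obtain t where tT: "t \<in> T" and t_min: "ha t = Min (ha ` T)" by auto
  have min: "ha t \<le> ha s" if "s \<in> T" for s
    using fin that by (simp add: t_min)
  have gap: "ha t < hb t" using tT by (simp add: T_def)
  show ?thesis
  proof (cases "odd (ha t + int t)")
    case True then show ?thesis using gap by blast
  next
    case even_t: False
    have "t \<noteq> 0" using gap start by (metis less_irrefl)
    then obtain t' where t: "t = Suc t'" using not0_implies_Suc by blast
    have step_a: "\<bar>ha (Suc u) - ha u\<bar> \<le> 1" for u using za by (simp add: zigzag_def)
    have step_b: "\<bar>hb (Suc u) - hb u\<bar> \<le> 1" for u using zb by (simp add: zigzag_def)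
    have flat_b: "hb t' = hb t \<and> hb (Suc t) = hb t" if "odd (hb t + int t)"
    proof -
      have "hb (t - 1) = hb t \<and> hb (Suc t) = hb t" using zb that unfolding zigzag_def by blast
      then show ?thesis using t by simp
    qed
    have left: "ha t' = ha t + 1 \<or> (ha t' < hb t' \<and> odd (ha t' + int t'))"
    proof (rule minimal_gap_neighbour)
      show "\<bar>ha t' - ha t\<bar> \<le> 1" "\<bar>hb t' - hb t\<bar> \<le> 1"
        using step_a[of t'] step_b[of t'] t by (simp_all add: abs_minus_commute)
    qed (use flat_b t gap even_t min in \<open>auto simp: T_def\<close>)
    have right: "ha (Suc t) = ha t + 1 \<or> (ha (Suc t) < hb (Suc t) \<and> odd (ha (Suc t) + int (Suc t)))"
      by (rule minimal_gap_neighbour) (use step_a step_b flat_b gap even_t min in \<open>auto simp: T_def\<close>)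
    show ?thesis
    proof (cases "ha t' = ha t + 1 \<and> ha (Suc t) = ha t + 1")
      case True then show ?thesis using gap t by auto
    next
      case False then show ?thesis using left right by blast
    qed
  qed
qed


lemma GS_profile_inj:
  assumes "p \<in> GS n" "q \<in> GS n" "\<And>x. height p x = height q x"
  shows "p = q"
proof -
  have "increments p = increments q"
  proof (rule nth_equalityI)
    show "length (increments p) = length (increments q)" using assms by (simp add: GS_def)
    fix k assume "k < length (increments p)"
    then show "increments p ! k = increments q ! k"
      using height_Suc[of k p] height_Suc[of k q] assms by (simp add: GS_def)
  qed
  then show ?thesis by (rule increments_inj)
qed

lemma GS_height_end: "p \<in> GS n \<Longrightarrow> 2 * n \<le> t \<Longrightarrow> height p t = 0"
  by (simp add: GS_def height_beyond)

definition lifted_at :: "path \<Rightarrow> nat \<Rightarrow> path \<Rightarrow> bool" where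
  "lifted_at p t q \<longleftrightarrow> length (increments q) = length (increments p) \<and>
     sum_list (increments q) = sum_list (increments p) \<and>
     (\<forall>x. height q x = height p x + (if x = t then 1 else 0))"

lemma lifted_at_height: "lifted_at p t q \<Longrightarrow> height q x = height p x + (if x = t then 1 else 0)"
  by (simp add: lifted_at_def)

lemma lifted_at_GS: "lifted_at p t q \<Longrightarrow> p \<in> GS n \<longleftrightarrow> q \<in> GS n"
  by (simp add: lifted_at_def GS_def)

lemma lifted_at_increments:
  assumes p: "increments p = A @ [u1, u2] @ B" and q: "increments q = A @ [u1 + 1, u2 - 1] @ B"
  shows "lifted_at p (Suc (length A)) q"
proof -
  have "sum_list (take x (A @ [u1 + 1, u2 - 1] @ B)) =
        sum_list (take x (A @ [u1, u2] @ B)) + (if x = Suc (length A) then 1 else 0)" for x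
  proof (cases "x \<le> Suc (length A)")
    case True
    then show ?thesis by (cases "x = Suc (length A)") (simp_all add: take_append)
  next
    case False
    then have "Suc (Suc (length A)) \<le> x" by simp
    then obtain k where "x = Suc (Suc (length A)) + k" using le_Suc_ex by blast
    then show ?thesis by (simp add: take_append)
  qed
  then show ?thesis using p q by (simp add: lifted_at_def height_def)
qed

lemma lifted_at_cover:
  assumes p: "p \<in> GS n" and q: "q \<in> GS n" and P: "P \<subseteq> GS n" and lift: "lifted_at p t q"
  shows "strictly_below p q \<and> \<not> (\<exists>z\<in>P. strictly_below p z \<and> strictly_below z q)"
proof
  have h: "height q x = height p x + (if x = t then 1 else 0)" for x
    using lift by (simp add: lifted_at_def)
  have "height q t \<noteq> height p t" using h[of t] by simp
  then have "p \<noteq> q" by blast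
  then show "strictly_below p q" using h by (simp add: strictly_below_def below_def)
  show "\<not> (\<exists>z\<in>P. strictly_below p z \<and> strictly_below z q)"
  proof
    assume "\<exists>z\<in>P. strictly_below p z \<and> strictly_below z q"
    then obtain z where z: "z \<in> GS n" "below p z" "below z q" "z \<noteq> p" "z \<noteq> q"
      using P by (auto simp: strictly_below_def)
    have between: "height p x \<le> height z x" "height z x \<le> height p x + (if x = t then 1 else 0)" for x
      using z(2,3) h unfolding below_def by metis+
    show False
    proof (cases "height z t = height p t")
      case True
      then have "height z x = height p x" for x using between[of x] by (cases "x = t") auto
      then show False using GS_profile_inj[OF z(1) p] z(4) by blast
    next
      case False
      then have "height z x = height q x" for x using between[of x] h[of x] by (cases "x = t") auto
      then show False using GS_profile_inj[OF z(1) q] z(5) by blast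
    qed
  qed
qed

lemma lifted_at_below:
  assumes "lifted_at p t q" "below p b" "height p t < height b t"
  shows "below q b"
  using assms by (auto simp: lifted_at_def below_def)

lemma lifted_at_above:
  assumes "lifted_at q t p" "below b p" "height b t < height p t"
  shows "below b q"
  unfolding below_def
proof
  fix x
  have "height p x = height q x + (if x = t then 1 else 0)" using assms(1) by (simp add: lifted_at_def)
  moreover have "height b x \<le> height p x" using assms(2) by (simp add: below_def)
  ultimately show "height b x \<le> height q x" using assms(3) by (cases "x = t") auto
qed


definition H_steps :: "path \<Rightarrow> nat set" where
  "H_steps p = {i. i < length p \<and> p ! i = H}"

definition valleys :: "path \<Rightarrow> nat set" where
  "valleys p = {i. Suc i < length p \<and> p ! i = D \<and> p ! Suc i = U}"

definition peaks :: "path \<Rightarrow> nat set" where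
  "peaks p = {i. Suc i < length p \<and> p ! i = U \<and> p ! Suc i = D}"

lemma index_sets_finite: "finite (H_steps p)" "finite (valleys p)" "finite (peaks p)"
  by (rule finite_subset[of _ "{..<length p}"]; auto simp: H_steps_def valleys_def peaks_def)+

lemma index_sets_disjoint: "H_steps p \<inter> valleys p = {}" "H_steps p \<inter> peaks p = {}"
  by (auto simp: H_steps_def valleys_def peaks_def)

lemma index_bound: "i \<in> H_steps p \<union> valleys p \<union> peaks p \<Longrightarrow> i < length p"
  by (auto simp: H_steps_def valleys_def peaks_def)

(* raising move: H becomes UD, a valley DU becomes H *)
definition raise_at :: "path \<Rightarrow> nat \<Rightarrow> path" where
  "raise_at p i = (if p ! i = H then take i p @ [U, D] @ drop (Suc i) p
                   else take i p @ [H] @ drop (Suc (Suc i)) p)"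

(* lowering move: H becomes DU, a peak UD becomes H *)
definition lower_at :: "path \<Rightarrow> nat \<Rightarrow> path" where
  "lower_at p i = (if p ! i = H then take i p @ [D, U] @ drop (Suc i) p
                   else take i p @ [H] @ drop (Suc (Suc i)) p)"

lemma increments_split2:
  "Suc i < length p \<Longrightarrow> increments p =
     increments (take i p) @ unit_moves (p ! i) @ unit_moves (p ! Suc i) @ increments (drop (Suc (Suc i)) p)"
  by (metis Cons_nth_drop_Suc Suc_lessD append_take_drop_id increments_Cons increments_append append.assoc)

lemma raise_at_lifted:
  assumes "i \<in> H_steps p \<union> valleys p"
  shows "lifted_at p (Suc (vertex p i)) (raise_at p i)"
proof (cases "i \<in> H_steps p")
  case True
  then have i: "i < length p" "p ! i = H" by (auto simp: H_steps_def)
  show ?thesis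
    using lifted_at_increments[of p _ 0 0 _ "raise_at p i"] increments_split[OF i(1)] i
    by (simp add: raise_at_def vertex_def)
next
  case False
  then have i: "Suc i < length p" "p ! i = D" "p ! Suc i = U" using assms by (auto simp: valleys_def)
  show ?thesis
    using lifted_at_increments[of p _ "-1" 1 _ "raise_at p i"] increments_split2[OF i(1)] i
    by (simp add: raise_at_def vertex_def)
qed

lemma lower_at_lifted:
  assumes "i \<in> H_steps p \<union> peaks p"
  shows "lifted_at (lower_at p i) (Suc (vertex p i)) p"
proof (cases "i \<in> H_steps p")
  case True
  then have i: "i < length p" "p ! i = H" by (auto simp: H_steps_def)
  show ?thesis
    using lifted_at_increments[of "lower_at p i" _ "-1" 1 _ p] increments_split[OF i(1)] i
    by (simp add: lower_at_def vertex_def)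
next
  case False
  then have i: "Suc i < length p" "p ! i = U" "p ! Suc i = D" using assms by (auto simp: peaks_def)
  show ?thesis
    using lifted_at_increments[of "lower_at p i" _ 0 0 _ p] increments_split2[OF i(1)] i
    by (simp add: lower_at_def vertex_def)
qed

(* different moves lift different points, hence give different paths *)
lemma raise_at_inj: "inj_on (raise_at p) (H_steps p \<union> valleys p)"
proof
  fix i j assume i: "i \<in> H_steps p \<union> valleys p" and j: "j \<in> H_steps p \<union> valleys p"
    and eq: "raise_at p i = raise_at p j"
  have "height (raise_at p i) (Suc (vertex p i)) = height (raise_at p j) (Suc (vertex p i))"
    using eq by simp
  then have "vertex p i = vertex p j"
    using lifted_at_height[OF raise_at_lifted[OF i], of "Suc (vertex p i)"]
      lifted_at_height[OF raise_at_lifted[OF j], of "Suc (vertex p i)"]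
    by (simp split: if_splits)
  then show "i = j" using vertex_inj index_bound i j by (meson Un_iff less_imp_le)
qed

lemma lower_at_inj: "inj_on (lower_at p) (H_steps p \<union> peaks p)"
proof
  fix i j assume i: "i \<in> H_steps p \<union> peaks p" and j: "j \<in> H_steps p \<union> peaks p"
    and eq: "lower_at p i = lower_at p j"
  have "height (lower_at p i) (Suc (vertex p i)) = height (lower_at p j) (Suc (vertex p i))"
    using eq by simp
  then have "vertex p i = vertex p j"
    using lifted_at_height[OF lower_at_lifted[OF i], of "Suc (vertex p i)"]
      lifted_at_height[OF lower_at_lifted[OF j], of "Suc (vertex p i)"]
    by (simp split: if_splits)
  then show "i = j" using vertex_inj index_bound i j by (meson Un_iff less_imp_le)
qed

lemma corner_index:
  assumes "even (height p t + int t)" "0 < t" "t < length (increments p)"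
    and before: "increments p ! (t - 1) = - e" and after: "increments p ! t = e" and "e \<noteq> 0"
  shows "\<exists>j. Suc j < length p \<and> Suc (vertex p j) = t \<and> last (unit_moves (p ! j)) = - e
             \<and> hd (unit_moves (p ! Suc j)) = e \<and> p ! j \<noteq> H"
proof -
  obtain j where j: "Suc j < length p" "vertex p (Suc j) = t"
    using even_point_vertex assms(1-3) by blast
  have last: "last (unit_moves (p ! j)) = - e"
    using increments_before_vertex[of j p] j before by simp
  have "hd (unit_moves (p ! Suc j)) = e"
    using increments_after_vertex[OF j(1)] j after by simp
  moreover have "p ! j \<noteq> H" using last \<open>e \<noteq> 0\<close> by auto
  moreover have "Suc (vertex p j) = t" using j vertex_Suc[of j p] \<open>p ! j \<noteq> H\<close> by (simp add: length_unit_moves)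
  ultimately show ?thesis using j last by blast
qed

lemma raisable_point_index:
  assumes t: "t < length (increments p)"
    and raisable: "odd (height p t + int t) \<or>
      (0 < t \<and> height p (t - 1) = height p t + 1 \<and> height p (Suc t) = height p t + 1)"
  shows "\<exists>i\<in>H_steps p \<union> valleys p. Suc (vertex p i) = t"
proof (cases "odd (height p t + int t)")
  case True
  then show ?thesis using odd_point_midpoint[of p t] t by (force simp: H_steps_def)
next
  case False
  with raisable have v: "0 < t" "height p (t - 1) = height p t + 1" "height p (Suc t) = height p t + 1"
    by auto
  have "increments p ! (t - 1) = - 1" "increments p ! t = 1"
    using height_Suc[of "t - 1" p] height_Suc[of t p] v t by simp_all
  then obtain j where j: "Suc j < length p" "Suc (vertex p j) = t"
    "last (unit_moves (p ! j)) = - 1" "hd (unit_moves (p ! Suc j)) = 1"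
    using corner_index[of p t 1] False v(1) t by auto
  have "p ! j = D" using j(3) by (cases "p ! j") auto
  moreover have "p ! Suc j = U" using j(4) by (cases "p ! Suc j") auto
  ultimately show ?thesis using j by (auto simp: valleys_def)
qed

lemma lowerable_point_index:
  assumes t: "t < length (increments p)"
    and lowerable: "odd (height p t + int t) \<or>
      (0 < t \<and> height p (t - 1) = height p t - 1 \<and> height p (Suc t) = height p t - 1)"
  shows "\<exists>i\<in>H_steps p \<union> peaks p. Suc (vertex p i) = t"
proof (cases "odd (height p t + int t)")
  case True
  then show ?thesis using odd_point_midpoint[of p t] t by (force simp: H_steps_def)
next
  case False
  with lowerable have v: "0 < t" "height p (t - 1) = height p t - 1" "height p (Suc t) = height p t - 1"
    by auto
  have "increments p ! (t - 1) = - (- 1)" "increments p ! t = - 1"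
    using height_Suc[of "t - 1" p] height_Suc[of t p] v t by simp_all
  then obtain j where j: "Suc j < length p" "Suc (vertex p j) = t"
    "last (unit_moves (p ! j)) = 1" "hd (unit_moves (p ! Suc j)) = - 1"
    using corner_index[of p t "- 1"] False v(1) t by auto
  have "p ! j = U" using j(3) by (cases "p ! j") auto
  moreover have "p ! Suc j = D" using j(4) by (cases "p ! Suc j") auto
  ultimately show ?thesis using j by (auto simp: peaks_def)
qed

lemma raise_towards:
  assumes a: "a \<in> GS n" and b: "b \<in> GS n" and ab: "strictly_below a b"
  shows "\<exists>i\<in>H_steps a \<union> valleys a. below (raise_at a i) b"
proof -
  have le: "\<forall>t. height a t \<le> height b t" using ab by (simp add: strictly_below_def below_def)
  obtain t0 where "height a t0 \<noteq> height b t0"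
    using GS_profile_inj[OF a b] ab by (auto simp: strictly_below_def)
  moreover have "\<forall>t\<ge>2 * n. height a t = height b t" using GS_height_end a b by simp
  ultimately obtain t where gap: "height a t < height b t" and
    raisable: "odd (height a t + int t) \<or>
      (0 < t \<and> height a (t - 1) = height a t + 1 \<and> height a (Suc t) = height a t + 1)"
    using zigzag_raisable_point[OF zigzag_height zigzag_height le] by fastforce
  have "\<not> 2 * n \<le> t" using gap GS_height_end[OF a, of t] GS_height_end[OF b, of t] by auto
  then have "t < length (increments a)" using a by (simp add: GS_def)
  then obtain i where i: "i \<in> H_steps a \<union> valleys a" "Suc (vertex a i) = t"
    using raisable_point_index raisable by blast
  have "below (raise_at a i) b"
    using lifted_at_below[OF raise_at_lifted[OF i(1)]] le gap i(2) by (simp add: below_def)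
  then show ?thesis using i(1) by blast
qed

(* Dually, some lowering move of a stays above any strictly smaller path b;
   this is the previous argument applied to the reflected profiles. *)
lemma lower_towards:
  assumes a: "a \<in> GS n" and b: "b \<in> GS n" and ba: "strictly_below b a"
  shows "\<exists>i\<in>H_steps a \<union> peaks a. below b (lower_at a i)"
proof -
  have le: "\<forall>t. - height a t \<le> - height b t" using ba by (simp add: strictly_below_def below_def)
  obtain t0 where "- height a t0 \<noteq> - height b t0"
    using GS_profile_inj[OF a b] ba by (auto simp: strictly_below_def)
  moreover have "\<forall>t\<ge>2 * n. - height a t = - height b t" using GS_height_end a b by simp
  ultimately obtain t where gap: "- height a t < - height b t" and
    raisable: "odd (- height a t + int t) \<or>
      (0 < t \<and> - height a (t - 1) = - height a t + 1 \<and> - height a (Suc t) = - height a t + 1)"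
    using zigzag_raisable_point[OF zigzag_uminus[OF zigzag_height] zigzag_uminus[OF zigzag_height] le]
    by fastforce
  have "odd (- height a t + int t) \<longleftrightarrow> odd (height a t + int t)" by presburger
  then have lowerable: "odd (height a t + int t) \<or>
      (0 < t \<and> height a (t - 1) = height a t - 1 \<and> height a (Suc t) = height a t - 1)"
    using raisable by auto
  have "\<not> 2 * n \<le> t" using gap GS_height_end[OF a, of t] GS_height_end[OF b, of t] by auto
  then have "t < length (increments a)" using a by (simp add: GS_def)
  then obtain i where i: "i \<in> H_steps a \<union> peaks a" "Suc (vertex a i) = t"
    using lowerable_point_index lowerable by blast
  have "below b (lower_at a i)"
    using lifted_at_above[OF lower_at_lifted[OF i(1)]] ba gap i(2) by (simp add: strictly_below_def)
  then show ?thesis using i(1) by blast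
qed

definition upset :: "nat \<Rightarrow> path set \<Rightarrow> bool" where
  "upset n P \<longleftrightarrow> P \<subseteq> GS n \<and> (\<forall>p\<in>P. \<forall>q\<in>GS n. below p q \<longrightarrow> q \<in> P)"

lemma upset_GS: "upset n (GS n)"
  by (simp add: upset_def)

lemma upset_S: "upset n (S n)"
  unfolding upset_def S_def below_def by (auto intro: order_trans)

lemma upcov_raisings:
  assumes P: "upset n P" and a: "a \<in> P"
  shows "upcov P a = raise_at a ` (H_steps a \<union> valleys a)"
proof -
  have aG: "a \<in> GS n" and PG: "P \<subseteq> GS n" using P a by (auto simp: upset_def)
  have raise: "raise_at a i \<in> P \<and> strictly_below a (raise_at a i) \<and>
      \<not> (\<exists>z\<in>P. strictly_below a z \<and> strictly_below z (raise_at a i))"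
    if i: "i \<in> H_steps a \<union> valleys a" for i
  proof -
    have G: "raise_at a i \<in> GS n" using lifted_at_GS[OF raise_at_lifted[OF i]] aG by simp
    have "strictly_below a (raise_at a i) \<and> \<not> (\<exists>z\<in>P. strictly_below a z \<and> strictly_below z (raise_at a i))"
      using lifted_at_cover[OF aG G PG raise_at_lifted[OF i]] .
    moreover then have "raise_at a i \<in> P" using P a G by (auto simp: upset_def strictly_below_def)
    ultimately show ?thesis by blast
  qed
  show ?thesis
  proof
    show "raise_at a ` (H_steps a \<union> valleys a) \<subseteq> upcov P a"
      using raise by (auto simp: upcov_def)
  next
    show "upcov P a \<subseteq> raise_at a ` (H_steps a \<union> valleys a)"
    proof
      fix y assume "y \<in> upcov P a"
      then have yP: "y \<in> P" and ay: "strictly_below a y"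
        and cover: "\<not> (\<exists>z\<in>P. strictly_below a z \<and> strictly_below z y)" by (auto simp: upcov_def)
      obtain i where i: "i \<in> H_steps a \<union> valleys a" and below: "below (raise_at a i) y"
        using raise_towards[OF aG _ ay] yP PG by blast
      have "raise_at a i = y"
        using raise[OF i] below cover yP by (auto simp: strictly_below_def)
      then show "y \<in> raise_at a ` (H_steps a \<union> valleys a)" using i by blast
    qed
  qed
qed

lemma downcov_lowerings:
  assumes P: "upset n P" and a: "a \<in> P"
  shows "downcov P a = lower_at a ` {i \<in> H_steps a \<union> peaks a. lower_at a i \<in> P}"
proof -
  have aG: "a \<in> GS n" and PG: "P \<subseteq> GS n" using P a by (auto simp: upset_def)
  have lower: "strictly_below (lower_at a i) a \<and>
      \<not> (\<exists>z\<in>P. strictly_below (lower_at a i) z \<and> strictly_below z a)"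
    if i: "i \<in> H_steps a \<union> peaks a" for i
  proof -
    have G: "lower_at a i \<in> GS n" using lifted_at_GS[OF lower_at_lifted[OF i]] aG by simp
    show ?thesis using lifted_at_cover[OF G aG PG lower_at_lifted[OF i]] .
  qed
  show ?thesis
  proof
    show "lower_at a ` {i \<in> H_steps a \<union> peaks a. lower_at a i \<in> P} \<subseteq> downcov P a"
      using lower by (auto simp: downcov_def)
  next
    show "downcov P a \<subseteq> lower_at a ` {i \<in> H_steps a \<union> peaks a. lower_at a i \<in> P}"
    proof
      fix y assume "y \<in> downcov P a"
      then have yP: "y \<in> P" and ya: "strictly_below y a"
        and cover: "\<not> (\<exists>z\<in>P. strictly_below y z \<and> strictly_below z a)" by (auto simp: downcov_def)
      obtain i where i: "i \<in> H_steps a \<union> peaks a" and above: "below y (lower_at a i)"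
        using lower_towards[OF aG _ ya] yP PG by blast
      have inP: "lower_at a i \<in> P"
        using P yP above lifted_at_GS[OF lower_at_lifted[OF i]] aG by (auto simp: upset_def)
      have "lower_at a i = y"
        using lower[OF i] above cover inP by (auto simp: strictly_below_def)
      then show "y \<in> lower_at a ` {i \<in> H_steps a \<union> peaks a. lower_at a i \<in> P}"
        using i inP by blast
    qed
  qed
qed

lemma occ_single: "occ [x] p = card {i. i < length p \<and> p ! i = x}"
proof -
  have "(i + length [x] \<le> length p \<and> take (length [x]) (drop i p) = [x]) \<longleftrightarrow>
        (i < length p \<and> p ! i = x)" for i
  proof (cases "i < length p")
    case True
    then have "drop i p = p ! i # drop (Suc i) p" by (rule Cons_nth_drop_Suc[symmetric])
    then show ?thesis using True by simp
  qed simp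
  then show ?thesis by (simp add: occ_def)
qed

lemma occ_pair: "occ [x, y] p = card {i. Suc i < length p \<and> p ! i = x \<and> p ! Suc i = y}"
proof -
  have "(i + length [x, y] \<le> length p \<and> take (length [x, y]) (drop i p) = [x, y]) \<longleftrightarrow>
        (Suc i < length p \<and> p ! i = x \<and> p ! Suc i = y)" for i
  proof (cases "Suc i < length p")
    case True
    then have "drop i p = p ! i # p ! Suc i # drop (Suc (Suc i)) p"
      by (metis Cons_nth_drop_Suc Suc_lessD)
    then show ?thesis using True by simp
  qed simp
  then show ?thesis by (simp add: occ_def)
qed

lemma occ_H: "occ [H] p = card (H_steps p)"
  by (simp add: occ_single H_steps_def)

lemma occ_DU: "occ [D, U] p = card (valleys p)"
  by (simp add: occ_pair valleys_def)

lemma occ_UD: "occ [U, D] p = card (peaks p)"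
  by (simp add: occ_pair peaks_def)

lemma occ_H_off_card: "occ_H_off p = card {i \<in> H_steps p. height p (vertex p i) \<noteq> 0}"
proof -
  have "height (take i p) (length (increments (take i p))) = height p (vertex p i)" for i
    using height_vertex[of p i] by (simp add: height_def)
  then show ?thesis unfolding occ_H_off_def H_steps_def by (simp add: conj_assoc)
qed

lemma card_upcov:
  assumes "upset n P" "a \<in> P"
  shows "card (upcov P a) = occ [H] a + occ [D, U] a"
proof -
  have "card (upcov P a) = card (H_steps a \<union> valleys a)"
    using upcov_raisings[OF assms] card_image[OF raise_at_inj] by simp
  also have "\<dots> = card (H_steps a) + card (valleys a)"
    using index_sets_finite index_sets_disjoint by (simp add: card_Un_disjoint)
  finally show ?thesis by (simp add: occ_H occ_DU)
qed

lemma card_downcov: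
  assumes "upset n P" "a \<in> P"
  shows "card (downcov P a) = card {i \<in> H_steps a \<union> peaks a. lower_at a i \<in> P}"
proof -
  have "inj_on (lower_at a) {i \<in> H_steps a \<union> peaks a. lower_at a i \<in> P}"
    by (rule inj_on_subset[OF lower_at_inj]) blast
  then show ?thesis using downcov_lowerings[OF assms] by (simp add: card_image)
qed

lemma lowerings_GS:
  "a \<in> GS n \<Longrightarrow> {i \<in> H_steps a \<union> peaks a. lower_at a i \<in> GS n} = H_steps a \<union> peaks a"
  using lifted_at_GS[OF lower_at_lifted] by blast

lemma lower_at_S:
  assumes a: "a \<in> S n" and i: "i \<in> H_steps a \<union> peaks a"
  shows "lower_at a i \<in> S n \<longleftrightarrow> 0 < height a (Suc (vertex a i))"
proof -
  have aG: "a \<in> GS n" and nonneg: "\<forall>x\<le>2 * n. 0 \<le> height a x" using a by (auto simp: S_def)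
  have G: "lower_at a i \<in> GS n" using lifted_at_GS[OF lower_at_lifted[OF i]] aG by simp
  have h: "height (lower_at a i) x = height a x - (if x = Suc (vertex a i) then 1 else 0)" for x
    using lifted_at_height[OF lower_at_lifted[OF i], of x] by simp
  have "Suc (vertex a i) \<le> 2 * n" using vertex_lt_length[of i a] index_bound[of i a] i aG
    by (auto simp: GS_def)
  then show ?thesis using G h nonneg by (force simp: S_def)
qed

lemma lowerings_S:
  assumes a: "a \<in> S n"
  shows "{i \<in> H_steps a \<union> peaks a. lower_at a i \<in> S n} =
         {i \<in> H_steps a. height a (vertex a i) \<noteq> 0} \<union> peaks a"
proof -
  have nonneg: "0 \<le> height a (vertex a i)" if "i < length a" for i
    using a vertex_lt_length[OF that] by (simp add: S_def GS_def)
  have "0 < height a (Suc (vertex a i)) \<longleftrightarrow> height a (vertex a i) \<noteq> 0" if "i \<in> H_steps a" for i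
  proof -
    have i: "i < length a" "a ! i = H" using that by (auto simp: H_steps_def)
    show ?thesis using height_H_step(1)[OF i] nonneg[OF i(1)] by linarith
  qed
  moreover have "0 < height a (Suc (vertex a i))" if "i \<in> peaks a" for i
  proof -
    have i: "i < length a" "a ! i = U" using that by (auto simp: peaks_def)
    then show ?thesis
      using height_Suc[OF vertex_lt_length[OF i(1)]] increments_after_vertex[OF i(1)] nonneg[OF i(1)] by simp
  qed
  ultimately show ?thesis using lower_at_S[OF a] by blast
qed

theorem mainTheorem11:
  fixes n :: nat
  shows "(\<forall>\<gamma>\<in>S n.
            card (upcov (S n) \<gamma>) = occ [H] \<gamma> + occ [D, U] \<gamma> \<and>
            card (downcov (S n) \<gamma>) = occ_H_off \<gamma> + occ [U, D] \<gamma>)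
       \<and> (\<forall>\<gamma>\<in>GS n.
            card (upcov (GS n) \<gamma>) = occ [H] \<gamma> + occ [D, U] \<gamma> \<and>
            card (downcov (GS n) \<gamma>) = occ [H] \<gamma> + occ [U, D] \<gamma>)"
proof (intro conjI ballI)
  fix g assume g: "g \<in> S n"
  show "card (upcov (S n) g) = occ [H] g + occ [D, U] g"
    using card_upcov[OF upset_S g] .
  have "card (downcov (S n) g) = card ({i \<in> H_steps g. height g (vertex g i) \<noteq> 0} \<union> peaks g)"
    using card_downcov[OF upset_S g] lowerings_S[OF g] by simp
  also have "\<dots> = occ_H_off g + occ [U, D] g"
    using index_sets_finite(1,3)[of g] index_sets_disjoint(2)[of g]
    by (subst card_Un_disjoint) (auto simp: occ_H_off_card occ_UD)
  finally show "card (downcov (S n) g) = occ_H_off g + occ [U, D] g" .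
next
  fix g assume g: "g \<in> GS n"
  show "card (upcov (GS n) g) = occ [H] g + occ [D, U] g"
    using card_upcov[OF upset_GS g] .
  have "card (downcov (GS n) g) = card (H_steps g \<union> peaks g)"
    using card_downcov[OF upset_GS g] lowerings_GS[OF g] by simp
  also have "\<dots> = occ [H] g + occ [U, D] g"
    using index_sets_finite index_sets_disjoint by (simp add: card_Un_disjoint occ_H occ_UD)
  finally show "card (downcov (GS n) g) = occ [H] g + occ [U, D] g" .
qed

end
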